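(* Let $(t^n)_{n=0}^{N_T}$ be a strictly increasing sequence of times and, for sequences $(z(n))_n$ in a vector space, let $\delta_t^{n+1}z:=(z(n+1)-z(n))/(t^{n+1}-t^n)$. Let, for $i=1,2,3$ and $n=0,\dots,N_T$, $\underline{\star_c\theta}^i_h(n)\in\underline X^2_{r,h}$ and $\underline{\star_cB}^i_h(n)\in\underline X^1_{r,h}$ (together with $\underline{\star_cD}^i_h(n)\in\underline X^1_{r,h}$) be a solution of the three-field scheme, so that in particular, for every $n$ and $i$, there is an element $\underline{\mathcal E}^i(n+1)\in\underline X^2_{r,h}$ (namely $N(n)\,\underline{\star_cE}^i_h(\underline{\star_cD}_h(n+1),\underline{\star_c\theta}_h(n))$, the same element in both equations) such that $$(\delta_t^{n+1}\underline{\star_c\theta}^i_h,\underline w_h)_{2,h}=(\underline{\mathcal E}^i(n+1),\underline w_h)_{2,h}\quad\forall\underline w_h\in\underline X^2_{r,h},$$ $$(\delta_t^{n+1}\underline{\star_cB}^i_h,\underline v_h)_{1,h}-(\underline{\mathcal E}^i(n+1),\underline d^1_{r,h}\underline v_h)_{2,h}=0\quad\forall\underline v_h\in\underline X^1_{r,h}.$$ Define, for $\underline u_h\in\underline X^1_{r,h}$ and $\underline p_h\in\underline X^0_{r,h}$, $$\mathfrak C^i_1(n,\underline u_h):=(\underline{\star_c\theta}^i_h(n),\underline d^1_{r,h}\underline u_h)_{2,h}-(\underline{\star_cB}^i_h(n),\underline u_h)_{1,h},\qquad \mathfrak C^i_2(n,\underline p_h):=(\underline{\star_cB}^i_h(n),\underline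 d^0_{r,h}\underline p_h)_{1,h}.$$ Then for every fixed $\underline u_h$ and $\underline p_h$, the quantities $\mathfrak C^i_1(n,\underline u_h)$ and $\mathfrak C^i_2(n,\underline p_h)$ are independent of $n\in\{0,\dots,N_T\}$.
   Context: $\underline X^k_{r,h}$, $k=0,1,2,3$, are the spaces of the exterior calculus discrete de Rham (ECDDR) complex of polynomial degree $r$ on a polytopal mesh of a domain in $\mathbb R^3$: finite-dimensional real vector spaces connected by linear discrete exterior derivatives $\underline d^k_{r,h}:\underline X^k_{r,h}\to\underline X^{k+1}_{r,h}$ satisfying the complex property $\underline d^{k+1}_{r,h}\circ\underline d^k_{r,h}=0$. Each $\underline X^k_{r,h}$ carries a discrete $L^2$-product $(\cdot,\cdot)_{k,h}$, a symmetric positive definite bilinear form (built from potential reconstructions plus a stabilisation term). $N(n)$ is the lapse at time $t^n$, and $\star_c$ denotes the constant Euclidean Hodge star of $\mathbb R^3$; the underlined symbols denote the discrete unknowns approximating $\star_c\theta^i$, $\star_cB^i$, $\star_cD^i$. *)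

theory Defs
  imports "HOL-Analysis.Analysis"
begin

definition spd_form :: "('a::real_vector \<Rightarrow> 'a \<Rightarrow> real) \<Rightarrow> bool" where
  "spd_form ip \<longleftrightarrow> bilinear ip \<and> (\<forall>x y. ip x y = ip y x) \<and> (\<forall>x. x \<noteq> 0 \<longrightarrow> ip x x > 0)"

definition dt :: "(nat \<Rightarrow> real) \<Rightarrow> (nat \<Rightarrow> 'a::real_vector) \<Rightarrow> nat \<Rightarrow> 'a" where
  "dt t z n = (1 / (t (Suc n) - t n)) *\<^sub>R (z (Suc n) - z n)"

end

theory Submission
  imports Defs
begin

text \<open>Both quantities are linear in the unknowns, so their discrete time derivatives are obtained
by replacing the unknowns by their difference quotients. Testing the \<open>\<theta>\<close>-equation with
\<open>d\<^sup>1 u\<close> and the \<open>B\<close>-equation with \<open>u\<close> shows that the derivative of \<open>C\<^sub>1\<close> is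
\<open>(E, d\<^sup>1 u) - (E, d\<^sup>1 u) = 0\<close>; testing the \<open>B\<close>-equation with \<open>d\<^sup>0 p\<close> and using
\<open>d\<^sup>1 d\<^sup>0 = 0\<close> shows that the derivative of \<open>C\<^sub>2\<close> vanishes. Since the time steps are
nonzero, a vanishing difference quotient means the quantity is the same at consecutive times.\<close>

lemma spd_form_linear_left: "spd_form ip \<Longrightarrow> linear (\<lambda>x. ip x y)"
  and spd_form_linear_right: "spd_form ip \<Longrightarrow> linear (\<lambda>y. ip x y)"
  by (simp_all add: spd_form_def bilinear_def)

lemma linear_dt: "linear l \<Longrightarrow> l (dt t z k) = dt t (\<lambda>n. l (z n)) k"
  by (simp add: dt_def linear_scale linear_diff)

lemma dt_diff: "dt t (\<lambda>n. f n - g n) k = dt t f k - dt t g k"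
  by (simp add: dt_def algebra_simps)

lemma dt_eq_0_iff:
  assumes "t k < t (Suc k)"
  shows "dt t z k = 0 \<longleftrightarrow> z (Suc k) = z k"
  using assms by (simp add: dt_def)

lemma constant_if_dt_eq_0:
  assumes "\<And>k. k < N \<Longrightarrow> t k < t (Suc k)"
    and "\<And>k. k < N \<Longrightarrow> dt t z k = 0"
    and "n \<le> N"
  shows "z n = z 0"
  using assms(3)
proof (induction n)
  case (Suc n)
  then have "z (Suc n) = z n"
    using assms(1,2) dt_eq_0_iff by (metis Suc_le_lessD)
  with Suc show ?case by simp
qed simp

theorem proposition6p1:
  fixes d0 :: "'x0::euclidean_space \<Rightarrow> 'x1::euclidean_space"
    and d1 :: "'x1 \<Rightarrow> 'x2::euclidean_space"
    and d2 :: "'x2 \<Rightarrow> 'x3::euclidean_space"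
    and ip0 :: "'x0 \<Rightarrow> 'x0 \<Rightarrow> real"
    and ip1 :: "'x1 \<Rightarrow> 'x1 \<Rightarrow> real"
    and ip2 :: "'x2 \<Rightarrow> 'x2 \<Rightarrow> real"
    and ip3 :: "'x3 \<Rightarrow> 'x3 \<Rightarrow> real"
    and t :: "nat \<Rightarrow> real" and NT :: nat
    and theta :: "nat \<Rightarrow> nat \<Rightarrow> 'x2"
    and B :: "nat \<Rightarrow> nat \<Rightarrow> 'x1"
    and D :: "nat \<Rightarrow> nat \<Rightarrow> 'x1"
    and E :: "nat \<Rightarrow> nat \<Rightarrow> 'x2"
  assumes "linear d0" and "linear d1" and "linear d2"
    and "\<And>p. d1 (d0 p) = 0" and "\<And>u. d2 (d1 u) = 0"
    and "spd_form ip0" and "spd_form ip1" and "spd_form ip2" and "spd_form ip3"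
    and "\<And>n. n < NT \<Longrightarrow> t n < t (Suc n)"
    and theta_eq: "\<And>i n w. i \<in> {1,2,3} \<Longrightarrow> n < NT \<Longrightarrow>
        ip2 (dt t (theta i) n) w = ip2 (E i (Suc n)) w"
    and B_eq: "\<And>i n v. i \<in> {1,2,3} \<Longrightarrow> n < NT \<Longrightarrow>
        ip1 (dt t (B i) n) v - ip2 (E i (Suc n)) (d1 v) = 0"
    and "i \<in> {1,2,3}" and "n \<le> NT"
  shows "ip2 (theta i n) (d1 u) - ip1 (B i n) u = ip2 (theta i 0) (d1 u) - ip1 (B i 0) u
         \<and> ip1 (B i n) (d0 p) = ip1 (B i 0) (d0 p)"
proof
  have dt_ip1: "dt t (\<lambda>n. ip1 (B i n) v) k = ip1 (dt t (B i) k) v" for v k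
    using linear_dt[OF spd_form_linear_left[OF \<open>spd_form ip1\<close>]] by simp
  have dt_ip2: "dt t (\<lambda>n. ip2 (theta i n) w) k = ip2 (dt t (theta i) k) w" for w k
    using linear_dt[OF spd_form_linear_left[OF \<open>spd_form ip2\<close>]] by simp
  have "dt t (\<lambda>n. ip2 (theta i n) (d1 u) - ip1 (B i n) u) k = 0" if "k < NT" for k
    using theta_eq[OF \<open>i \<in> _\<close> that] B_eq[OF \<open>i \<in> _\<close> that] by (simp add: dt_diff dt_ip1 dt_ip2)
  then show "ip2 (theta i n) (d1 u) - ip1 (B i n) u = ip2 (theta i 0) (d1 u) - ip1 (B i 0) u"
    using constant_if_dt_eq_0[of NT t] assms(10) \<open>n \<le> NT\<close> by blast
  have ip2_0: "ip2 w 0 = 0" for w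
    using linear_0[OF spd_form_linear_right[OF \<open>spd_form ip2\<close>]] .
  have "dt t (\<lambda>n. ip1 (B i n) (d0 p)) k = 0" if "k < NT" for k
    using B_eq[OF \<open>i \<in> _\<close> that, of "d0 p"] by (simp add: dt_ip1 ip2_0 \<open>\<And>p. d1 (d0 p) = 0\<close>)
  then show "ip1 (B i n) (d0 p) = ip1 (B i 0) (d0 p)"
    using constant_if_dt_eq_0[of NT t] assms(10) \<open>n \<le> NT\<close> by blast
qed

end
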